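(* Let $G$ be a permutation group on a finite set $\Omega$ of size $t$. If $G$ contains a regular normal subgroup, then $\mathrm{I}(G)\le \log t+1$.
   Context: Logarithms are to base $2$. An irredundant base for $G$ on $\Omega$ is an ordered sequence $[\omega_1,\dots,\omega_k]$ with $G>G_{\omega_1}>G_{\omega_1,\omega_2}>\dots>G_{\omega_1,\dots,\omega_k}=1$, all inclusions strict; $\mathrm{I}(G)$ is the maximum length of an irredundant base. *)

theory Defs
  imports Complex_Main "HOL-Algebra.Bij" "HOL-Algebra.Coset"
begin

definition perm_group :: "'a set \<Rightarrow> ('a \<Rightarrow> 'a) set \<Rightarrow> bool" where
  "perm_group \<Omega> G \<longleftrightarrow> subgroup G (BijGroup \<Omega>)"

definition perm_grp :: "'a set \<Rightarrow> ('a \<Rightarrow> 'a) set \<Rightarrow> ('a \<Rightarrow> 'a) monoid" where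
  "perm_grp \<Omega> G = (BijGroup \<Omega>)\<lparr>carrier := G\<rparr>"

definition regular_on :: "'a set \<Rightarrow> ('a \<Rightarrow> 'a) set \<Rightarrow> bool" where
  "regular_on \<Omega> N \<longleftrightarrow> (\<forall>\<alpha>\<in>\<Omega>. \<forall>\<beta>\<in>\<Omega>. \<exists>!g. g \<in> N \<and> g \<alpha> = \<beta>)"

definition pw_stab :: "('a \<Rightarrow> 'a) set \<Rightarrow> 'a list \<Rightarrow> ('a \<Rightarrow> 'a) set" where
  "pw_stab G ws = {g \<in> G. \<forall>w \<in> set ws. g w = w}"

definition irredundant_base :: "'a set \<Rightarrow> ('a \<Rightarrow> 'a) set \<Rightarrow> 'a list \<Rightarrow> bool" where
  "irredundant_base \<Omega> G ws \<longleftrightarrow>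
     set ws \<subseteq> \<Omega> \<and>
     (\<forall>i < length ws. pw_stab G (take (Suc i) ws) \<subset> pw_stab G (take i ws)) \<and>
     pw_stab G ws = {\<one>\<^bsub>BijGroup \<Omega>\<^esub>}"

text \<open>I(G): the maximum length of an irredundant base.\<close>
definition max_irredundant_base :: "'a set \<Rightarrow> ('a \<Rightarrow> 'a) set \<Rightarrow> nat" where
  "max_irredundant_base \<Omega> G = Max {length ws | ws. irredundant_base \<Omega> G ws}"

end

theory Submission
  imports Defs
begin

text \<open>Let \<open>N\<close> be regular and normal in \<open>G\<close>, let \<open>\<alpha>\<close> be the first point of an irredundant base
  and let \<open>H \<le> G\<^sub>\<alpha>\<close>. If \<open>n \<in> N\<close> maps \<open>\<alpha>\<close> to a fixed point of \<open>H\<close>, then every conjugate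
  \<open>h n h\<^sup>-\<^sup>1\<close> with \<open>h \<in> H\<close> lies in \<open>N\<close> and agrees with \<open>n\<close> at \<open>\<alpha>\<close>, so by regularity \<open>n\<close>
  centralises \<open>H\<close>. Consequently, when the stabiliser chain passes from \<open>H\<close> to \<open>H' < H\<close> by
  fixing a new point \<open>b\<close>, the element of \<open>N\<close> sending \<open>\<alpha>\<close> to \<open>b\<close> maps the fixed points of \<open>H\<close>
  injectively onto fixed points of \<open>H'\<close> that are not fixed by \<open>H\<close>. Hence the number of fixed
  points at least doubles at each step of the chain after the first, and a base of length \<open>k\<close>
  forces \<open>2\<^sup>k\<^sup>-\<^sup>1 \<le> t\<close>.\<close>

definition fixed_points :: "'a set \<Rightarrow> ('a \<Rightarrow> 'a) set \<Rightarrow> 'a set" where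
  "fixed_points \<Omega> H = {x \<in> \<Omega>. \<forall>h\<in>H. h x = x}"

lemma fixed_points_antimono: "H' \<subseteq> H \<Longrightarrow> fixed_points \<Omega> H \<subseteq> fixed_points \<Omega> H'"
  by (auto simp: fixed_points_def)

lemma image_fixed_points_subset:
  assumes "n ` \<Omega> \<subseteq> \<Omega>" and "\<And>h x. h \<in> H \<Longrightarrow> x \<in> \<Omega> \<Longrightarrow> h (n x) = n (h x)"
  shows "n ` fixed_points \<Omega> H \<subseteq> fixed_points \<Omega> H"
  using assms by (fastforce simp: fixed_points_def)

lemma card_double_le:
  assumes "finite B" "A \<subseteq> B" "f ` A \<subseteq> B" "f ` A \<inter> A = {}" "inj_on f A"
  shows "2 * card A \<le> card B"
proof -
  have "finite A" using assms(1,2) finite_subset by blast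
  then have "card A + card (f ` A) = card (A \<union> f ` A)"
    using assms(4) by (simp add: card_Un_disjoint Int_commute)
  also have "\<dots> \<le> card B" using assms by (intro card_mono) auto
  finally show ?thesis using card_image[OF assms(5)] by simp
qed

lemma pw_stab_subset: "pw_stab G ws \<subseteq> G"
  by (auto simp: pw_stab_def)

lemma pw_stab_snoc: "pw_stab G (ws @ [x]) = pw_stab G ws \<inter> {g. g x = x}"
  by (auto simp: pw_stab_def)

lemma set_subset_fixed_points_pw_stab: "set ws \<subseteq> \<Omega> \<Longrightarrow> set ws \<subseteq> fixed_points \<Omega> (pw_stab G ws)"
  by (auto simp: fixed_points_def pw_stab_def)

lemma pw_stab_snoc_eq_iff:
  "x \<in> \<Omega> \<Longrightarrow> pw_stab G (ws @ [x]) = pw_stab G ws \<longleftrightarrow> x \<in> fixed_points \<Omega> (pw_stab G ws)"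
  by (auto simp: pw_stab_snoc fixed_points_def)

lemma pw_stab_all_points:
  assumes "perm_group \<Omega> G" and "set xs = \<Omega>"
  shows "pw_stab G xs = {\<one>\<^bsub>BijGroup \<Omega>\<^esub>}"
proof -
  have sub: "subgroup G (BijGroup \<Omega>)" using assms(1) by (simp add: perm_group_def)
  then have "G \<subseteq> Bij \<Omega>" using subgroup.subset by (fastforce simp: BijGroup_def)
  then have "g = (\<lambda>x\<in>\<Omega>. x)" if "g \<in> pw_stab G xs" for g
    using that assms(2) Bij_imp_extensional
    by (fastforce simp: pw_stab_def fun_eq_iff extensional_def)
  moreover have "(\<lambda>x\<in>\<Omega>. x) \<in> G"
    using subgroup.one_closed[OF sub] by (simp add: BijGroup_def)
  ultimately show ?thesis using assms(2) by (auto simp: pw_stab_def BijGroup_def)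
qed

text \<open>Greedy construction: drop each point whose addition does not shrink the stabiliser.\<close>

lemma irredundant_sublist_exists:
  "\<exists>ws. set ws \<subseteq> set xs \<and>
     (\<forall>i < length ws. pw_stab G (take (Suc i) ws) \<subset> pw_stab G (take i ws)) \<and>
     pw_stab G ws = pw_stab G xs"
proof (induction xs rule: rev_induct)
  case Nil
  show ?case by (intro exI[of _ "[]"]) simp
next
  case (snoc x xs)
  then obtain ws where ws: "set ws \<subseteq> set xs"
    "\<forall>i < length ws. pw_stab G (take (Suc i) ws) \<subset> pw_stab G (take i ws)"
    "pw_stab G ws = pw_stab G xs" by blast
  have same_stab: "pw_stab G (ws @ [x]) = pw_stab G (xs @ [x])"
    using ws(3) by (simp add: pw_stab_snoc)
  show ?case
  proof (cases "pw_stab G (ws @ [x]) \<subset> pw_stab G ws")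
    case True
    then have "\<forall>i < length (ws @ [x]).
        pw_stab G (take (Suc i) (ws @ [x])) \<subset> pw_stab G (take i (ws @ [x]))"
      using ws(2) by (auto simp: less_Suc_eq)
    then show ?thesis using ws(1) same_stab by (intro exI[of _ "ws @ [x]"]) auto
  next
    case False
    then have "pw_stab G ws = pw_stab G (ws @ [x])" by (auto simp: pw_stab_snoc)
    then show ?thesis using ws same_stab by (intro exI[of _ ws]) auto
  qed
qed

lemma irredundant_base_exists:
  assumes "finite \<Omega>" and "perm_group \<Omega> G"
  shows "\<exists>ws. irredundant_base \<Omega> G ws"
proof -
  obtain xs where xs: "set xs = \<Omega>" using finite_list[OF assms(1)] by blast
  obtain ws where "set ws \<subseteq> set xs"
    and "\<forall>i < length ws. pw_stab G (take (Suc i) ws) \<subset> pw_stab G (take i ws)"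
    and "pw_stab G ws = pw_stab G xs"
    using irredundant_sublist_exists[of xs G] by blast
  then have "irredundant_base \<Omega> G ws"
    using xs pw_stab_all_points[OF assms(2) xs] unfolding irredundant_base_def by simp
  then show ?thesis ..
qed

lemma log2_of_nat_nonneg: "0 \<le> log 2 (real t)"
  by (cases "t = 0") (auto simp: log_def)

lemma le_log2_plus_one:
  assumes "2 ^ (k - 1) \<le> t"
  shows "real k \<le> log 2 (real t) + 1"
proof -
  have "(0::nat) < 2 ^ (k - 1)" by simp
  then have "0 < real t" using assms by linarith
  moreover have "2 powr real (k - 1) \<le> real t"
    using assms by (simp add: powr_realpow flip: of_nat_le_iff)
  ultimately have "real (k - 1) \<le> log 2 (real t)" by (simp add: le_log_iff)
  then show ?thesis by linarith
qed

locale regular_normal_perm_group =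
  fixes \<Omega> :: "'a set" and G N :: "('a \<Rightarrow> 'a) set"
  assumes perm_group: "perm_group \<Omega> G"
    and normal: "normal N (perm_grp \<Omega> G)"
    and regular: "regular_on \<Omega> N"
begin

lemma subgroup_G: "subgroup G (BijGroup \<Omega>)"
  using perm_group by (simp add: perm_group_def)

lemma G_subset_Bij: "G \<subseteq> Bij \<Omega>"
  using subgroup.subset[OF subgroup_G] by (simp add: BijGroup_def)

lemma subgroup_N: "subgroup N (perm_grp \<Omega> G)"
  using normal by (rule normal_imp_subgroup)

lemma N_subset_G: "N \<subseteq> G"
  using subgroup.subset[OF subgroup_N] by (simp add: perm_grp_def)

lemma bij_betw_G: "h \<in> G \<Longrightarrow> bij_betw h \<Omega> \<Omega>"
  using G_subset_Bij by (auto simp: Bij_def)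

lemma bij_betw_N: "n \<in> N \<Longrightarrow> bij_betw n \<Omega> \<Omega>"
  using N_subset_G bij_betw_G by blast

lemma compose_N:
  assumes "n \<in> N" "m \<in> N"
  shows "compose \<Omega> n m \<in> N"
proof -
  have "n \<otimes>\<^bsub>perm_grp \<Omega> G\<^esub> m \<in> N" using subgroup.m_closed[OF subgroup_N] assms by blast
  moreover have "n \<in> Bij \<Omega>" "m \<in> Bij \<Omega>" using assms N_subset_G G_subset_Bij by auto
  ultimately show ?thesis by (simp add: perm_grp_def BijGroup_def)
qed

lemma conjugate_N:
  assumes "h \<in> G" and "n \<in> N"
  shows "compose \<Omega> (compose \<Omega> h n) (restrict (inv_into \<Omega> h) \<Omega>) \<in> N"
proof -
  have grp: "group (perm_grp \<Omega> G)"
    unfolding perm_grp_def using subgroup.subgroup_is_group[OF subgroup_G group_BijGroup] .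
  have "h \<otimes>\<^bsub>perm_grp \<Omega> G\<^esub> n \<otimes>\<^bsub>perm_grp \<Omega> G\<^esub> inv\<^bsub>perm_grp \<Omega> G\<^esub> h \<in> N"
    using group.normal_inv_iff[OF grp] normal assms by (auto simp: perm_grp_def)
  moreover have "inv\<^bsub>perm_grp \<Omega> G\<^esub> h = restrict (inv_into \<Omega> h) \<Omega>"
    using group.m_inv_consistent[OF group_BijGroup subgroup_G assms(1)] assms(1) G_subset_Bij
      inv_BijGroup by (auto simp: perm_grp_def)
  moreover have "h \<in> Bij \<Omega>" "n \<in> Bij \<Omega>"
    using assms N_subset_G G_subset_Bij by auto
  ultimately show ?thesis
    by (simp add: perm_grp_def BijGroup_def compose_Bij restrict_inv_into_Bij)
qed

lemma N_transitive: "\<alpha> \<in> \<Omega> \<Longrightarrow> \<beta> \<in> \<Omega> \<Longrightarrow> \<exists>n\<in>N. n \<alpha> = \<beta>"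
  using regular unfolding regular_on_def by blast

lemma N_eq_if_agree:
  assumes "n \<in> N" "m \<in> N" "\<alpha> \<in> \<Omega>" "n \<alpha> = m \<alpha>"
  shows "n = m"
proof -
  have "n \<alpha> \<in> \<Omega>" using bij_betw_N[OF assms(1)] assms(3) by (meson bij_betwE)
  then show ?thesis using regular assms unfolding regular_on_def by metis
qed

lemma commute_if_fixes_both:
  assumes n: "n \<in> N" and h: "h \<in> G" and stab: "h \<alpha> = \<alpha>" "h (n \<alpha>) = n \<alpha>"
    and \<alpha>: "\<alpha> \<in> \<Omega>" and x: "x \<in> \<Omega>"
  shows "h (n x) = n (h x)"
proof -
  define m where "m = compose \<Omega> (compose \<Omega> h n) (restrict (inv_into \<Omega> h) \<Omega>)"
  have bij: "bij_betw h \<Omega> \<Omega>" "bij_betw n \<Omega> \<Omega>" using bij_betw_G[OF h] bij_betw_N[OF n] .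
  have m_apply: "m y = h (n (inv_into \<Omega> h y))" if "y \<in> \<Omega>" for y
    using that bij by (simp add: m_def compose_def bij_betw_def inv_into_into)
  have "inv_into \<Omega> h \<alpha> = \<alpha>" using stab \<alpha> bij by (metis bij_betw_def inv_into_f_f)
  then have "m \<alpha> = n \<alpha>" using m_apply[OF \<alpha>] stab by simp
  then have "m = n" using N_eq_if_agree conjugate_N[OF h n] n \<alpha> by (simp add: m_def)
  moreover have "h x \<in> \<Omega>" using bij x by (meson bij_betwE)
  ultimately have "n (h x) = h (n (inv_into \<Omega> h (h x)))" using m_apply by metis
  also have "\<dots> = h (n x)" using bij x by (metis bij_betw_def inv_into_f_f)
  finally show ?thesis by simp
qed

lemma commute_if_fixed_point:
  assumes "H \<subseteq> G" "\<alpha> \<in> fixed_points \<Omega> H" "n \<in> N" "n \<alpha> \<in> fixed_points \<Omega> H"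
    and "h \<in> H" "x \<in> \<Omega>"
  shows "h (n x) = n (h x)"
  using assms commute_if_fixes_both[of n h \<alpha> x] by (auto simp: fixed_points_def)

text \<open>If \<open>x\<close> and \<open>n x\<close> were both fixed by \<open>H\<close>, write \<open>x = c \<alpha>\<close> with \<open>c \<in> N\<close>: then \<open>c\<close> and
  \<open>n \<circ> c\<close> centralise \<open>H\<close>, hence so does \<open>n\<close>, which would then fix \<open>n \<alpha>\<close> under \<open>H\<close>.\<close>

lemma image_fixed_points_disjoint:
  assumes H: "H \<subseteq> G" and \<alpha>: "\<alpha> \<in> fixed_points \<Omega> H" and n: "n \<in> N"
    and b: "n \<alpha> \<notin> fixed_points \<Omega> H"
  shows "n ` fixed_points \<Omega> H \<inter> fixed_points \<Omega> H = {}"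
proof (rule ccontr)
  assume "n ` fixed_points \<Omega> H \<inter> fixed_points \<Omega> H \<noteq> {}"
  then obtain x where x: "x \<in> fixed_points \<Omega> H" "n x \<in> fixed_points \<Omega> H" by blast
  have \<alpha>\<Omega>: "\<alpha> \<in> \<Omega>" using \<alpha> by (simp add: fixed_points_def)
  obtain c where c: "c \<in> N" "c \<alpha> = x"
    using N_transitive[OF \<alpha>\<Omega>] x(1) by (auto simp: fixed_points_def)
  define m where "m = compose \<Omega> n c"
  have m: "m \<in> N" "m \<alpha> = n x" using compose_N[OF n c(1)] \<alpha>\<Omega> c(2) by (auto simp: m_def compose_def)
  obtain y where y: "y \<in> \<Omega>" "c y = \<alpha>"
    using bij_betw_imp_surj_on[OF bij_betw_N[OF c(1)]] \<alpha>\<Omega> by (metis imageE)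
  have "h (n \<alpha>) = n \<alpha>" if h: "h \<in> H" for h
  proof -
    have hy: "h y \<in> \<Omega>" using bij_betw_G h H y(1) by (meson bij_betwE subsetD)
    have "h (n \<alpha>) = h (m y)" using y by (simp add: m_def compose_def)
    also have "\<dots> = m (h y)" using commute_if_fixed_point[OF H \<alpha> m(1)] m(2) x(2) h y(1) by simp
    also have "\<dots> = n (h (c y))"
      using commute_if_fixed_point[OF H \<alpha> c(1)] c(2) x(1) h y(1) hy by (simp add: m_def compose_def)
    also have "\<dots> = n \<alpha>" using y(2) \<alpha> h by (auto simp: fixed_points_def)
    finally show ?thesis .
  qed
  moreover have "n \<alpha> \<in> \<Omega>" using bij_betw_N[OF n] \<alpha>\<Omega> by (meson bij_betwE)
  ultimately show False using b by (simp add: fixed_points_def)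
qed

lemma card_fixed_points_doubles:
  assumes fin: "finite \<Omega>" and H: "H \<subseteq> G" "H' \<subseteq> H" and \<alpha>: "\<alpha> \<in> fixed_points \<Omega> H"
    and b: "b \<in> fixed_points \<Omega> H'" "b \<notin> fixed_points \<Omega> H"
  shows "2 * card (fixed_points \<Omega> H) \<le> card (fixed_points \<Omega> H')"
proof -
  have \<alpha>\<Omega>: "\<alpha> \<in> \<Omega>" and b\<Omega>: "b \<in> \<Omega>" using \<alpha> b(1) by (auto simp: fixed_points_def)
  obtain n where n: "n \<in> N" "n \<alpha> = b" using N_transitive[OF \<alpha>\<Omega> b\<Omega>] by blast
  have bij: "bij_betw n \<Omega> \<Omega>" using bij_betw_N[OF n(1)] .
  have sub: "fixed_points \<Omega> H \<subseteq> fixed_points \<Omega> H'" using fixed_points_antimono[OF H(2)] .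
  have "n ` fixed_points \<Omega> H' \<subseteq> fixed_points \<Omega> H'"
    using commute_if_fixed_point[of H' \<alpha> n] H \<alpha> sub b(1) n bij
    by (intro image_fixed_points_subset) (auto simp: bij_betw_def)
  then have "n ` fixed_points \<Omega> H \<subseteq> fixed_points \<Omega> H'" using sub by blast
  moreover have "n ` fixed_points \<Omega> H \<inter> fixed_points \<Omega> H = {}"
    using image_fixed_points_disjoint[OF H(1) \<alpha> n(1)] n(2) b(2) by simp
  moreover have "inj_on n (fixed_points \<Omega> H)"
    using bij by (auto simp: bij_betw_def fixed_points_def intro: inj_on_subset)
  moreover have "finite (fixed_points \<Omega> H')" using fin by (simp add: fixed_points_def)
  ultimately show ?thesis using card_double_le sub by blast
qed

lemma card_fixed_points_irredundant_base:
  assumes fin: "finite \<Omega>" and ws: "irredundant_base \<Omega> G ws"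
    and i: "1 \<le> i" "i \<le> length ws"
  shows "2 ^ (i - 1) \<le> card (fixed_points \<Omega> (pw_stab G (take i ws)))"
  using i
proof (induction i rule: nat_induct_at_least)
  case base
  have "ws \<noteq> []" using base by auto
  then have "take 1 ws = [ws ! 0]" and "ws ! 0 \<in> \<Omega>"
    using ws unfolding irredundant_base_def by (auto simp: neq_Nil_conv)
  then have "ws ! 0 \<in> fixed_points \<Omega> (pw_stab G (take 1 ws))"
    by (simp add: fixed_points_def pw_stab_def)
  moreover have "finite (fixed_points \<Omega> (pw_stab G (take 1 ws)))"
    using fin by (simp add: fixed_points_def)
  ultimately have "0 < card (fixed_points \<Omega> (pw_stab G (take 1 ws)))"
    using card_gt_0_iff by blast
  then show ?case by simp
next
  case (Suc i)
  let ?H = "pw_stab G (take i ws)" and ?H' = "pw_stab G (take (Suc i) ws)"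
  have i_less: "i < length ws" using Suc.prems by simp
  have set: "set ws \<subseteq> \<Omega>" and strict: "?H' \<subset> ?H"
    using ws i_less unfolding irredundant_base_def by blast+
  have take: "take (Suc i) ws = take i ws @ [ws ! i]"
    using i_less by (simp add: take_Suc_conv_app_nth)
  have wi: "ws ! i \<in> \<Omega>" using set nth_mem[OF i_less] by blast
  have "ws ! 0 = take i ws ! 0" using Suc.hyps by simp
  also have "\<dots> \<in> set (take i ws)" using Suc.hyps i_less by (intro nth_mem) simp
  also have "\<dots> \<subseteq> fixed_points \<Omega> ?H"
    using order_trans[OF set_take_subset set] by (rule set_subset_fixed_points_pw_stab)
  finally have first: "ws ! 0 \<in> fixed_points \<Omega> ?H" .
  have new: "ws ! i \<in> fixed_points \<Omega> ?H'"
    using take wi by (simp add: fixed_points_def pw_stab_def)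
  have not_old: "ws ! i \<notin> fixed_points \<Omega> ?H"
    using strict pw_stab_snoc_eq_iff[OF wi, of G "take i ws"] by (auto simp: take)
  have "2 * card (fixed_points \<Omega> ?H) \<le> card (fixed_points \<Omega> ?H')"
    using strict card_fixed_points_doubles[OF fin pw_stab_subset _ first new not_old] by blast
  moreover have "(2::nat) ^ (Suc i - 1) = 2 * 2 ^ (i - 1)" using Suc.hyps by (cases i) simp_all
  ultimately show ?case using Suc.IH i_less by simp
qed

lemma irredundant_base_length_le:
  assumes fin: "finite \<Omega>" and ws: "irredundant_base \<Omega> G ws"
  shows "real (length ws) \<le> log 2 (real (card \<Omega>)) + 1"
proof (cases "ws = []")
  case True
  then show ?thesis using log2_of_nat_nonneg by simp
next
  case False
  then have "2 ^ (length ws - 1) \<le> card (fixed_points \<Omega> (pw_stab G ws))"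
    using card_fixed_points_irredundant_base[OF fin ws, of "length ws"] by (simp add: Suc_le_eq)
  also have "\<dots> \<le> card \<Omega>" using fin by (intro card_mono) (auto simp: fixed_points_def)
  finally show ?thesis by (rule le_log2_plus_one)
qed

end

theorem proposition3p1:
  fixes \<Omega> :: "'a set" and G N :: "('a \<Rightarrow> 'a) set" and t :: nat
  assumes "finite \<Omega>" and "card \<Omega> = t"
    and "perm_group \<Omega> G"
    and "normal N (perm_grp \<Omega> G)"
    and "regular_on \<Omega> N"
  shows "real (max_irredundant_base \<Omega> G) \<le> log 2 (real t) + 1"
proof -
  interpret regular_normal_perm_group \<Omega> G N using assms(3-5) by (rule regular_normal_perm_group.intro)
  define S where "S = {length ws | ws. irredundant_base \<Omega> G ws}"
  have bound: "real k \<le> log 2 (real t) + 1" if "k \<in> S" for k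
    using that irredundant_base_length_le[OF assms(1)] assms(2) by (auto simp: S_def)
  have "S \<subseteq> {..nat \<lceil>log 2 (real t) + 1\<rceil>}"
  proof
    fix k assume "k \<in> S"
    then have "\<lceil>real k\<rceil> \<le> \<lceil>log 2 (real t) + 1\<rceil>" by (intro ceiling_mono bound)
    then show "k \<in> {..nat \<lceil>log 2 (real t) + 1\<rceil>}" by simp
  qed
  then have "finite S" using finite_subset by blast
  moreover have "S \<noteq> {}" using irredundant_base_exists[OF assms(1,3)] by (auto simp: S_def)
  ultimately show ?thesis using Max_in bound by (simp add: max_irredundant_base_def flip: S_def)
qed

end
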